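(* In the semi-discrete setting described in the context, let $c\in\mathcal{F}(\mathring\Omega_h)$ and let $X$ be a solution of \[\begin{cases}-\partial_tX+AX=c\,\delta_{t=T},\\ X(0)=0,\\ X|_{\Gamma^0}=0,\\ X|_{\Gamma^1}=0.\end{cases}\] Then $X\equiv0$, and consequently $c=0$.
   Context: Let $h>0$, integers $M,N\ge2$, grid $\Omega_h=\{(ih,jh):0\le i\le M,0\le j\le N\}$ with nodes indexed $(i,j)$, interior $\mathring\Omega_h=\{1\le i\le M-1,1\le j\le N-1\}$; $\Gamma^0=\{(0,j):0\le j\le N\}$ and $\Gamma^1=\{(1,j):1\le j\le N-1\}$; functions on $\mathring\Omega_h$ are extended by $0$ on all boundary nodes. $A$ is the 5-point discrete Dirichlet Laplacian $[A\phi]_{(i,j)}=h^{-2}(4\phi_{(i,j)}-\phi_{(i+1,j)}-\phi_{(i-1,j)}-\phi_{(i,j+1)}-\phi_{(i,j-1)})$. The equation with right-hand side $c\,\delta_{t=T}$ is understood in the distributional sense in time: $-\partial_tX+AX=0$ on $[0,T)$ and on $(T,\infty)$, with the jump $X(T^+)-X(T^-)=c$. *)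

theory Defs
  imports "HOL-Analysis.Analysis"
begin

definition interior :: "nat \<Rightarrow> nat \<Rightarrow> (nat \<times> nat) set" where
  "interior M N = {(i, j). 1 \<le> i \<and> i \<le> M - 1 \<and> 1 \<le> j \<and> j \<le> N - 1}"

definition ext0 :: "nat \<Rightarrow> nat \<Rightarrow> (nat \<times> nat \<Rightarrow> real) \<Rightarrow> nat \<times> nat \<Rightarrow> real" where
  "ext0 M N \<phi> p = (if p \<in> interior M N then \<phi> p else 0)"

text \<open>5-point discrete Dirichlet Laplacian (evaluated at interior nodes, where i,j \<ge> 1).\<close>
definition lapA :: "real \<Rightarrow> nat \<Rightarrow> nat \<Rightarrow> (nat \<times> nat \<Rightarrow> real) \<Rightarrow> nat \<times> nat \<Rightarrow> real" where
  "lapA h M N \<phi> p = (case p of (i, j) \<Rightarrow>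
     (4 * ext0 M N \<phi> (i, j) - ext0 M N \<phi> (i + 1, j) - ext0 M N \<phi> (i - 1, j)
        - ext0 M N \<phi> (i, j + 1) - ext0 M N \<phi> (i, j - 1)) / h\<^sup>2)"

end

theory Submission
  imports Defs
begin

text \<open>Read at an interior node of column i+1, the equation AX = 0 determines X on column i+2
  from columns i and i+1. Since X vanishes on the boundary column 0 and, by hypothesis, on
  column 1, it vanishes column by column for all t \<noteq> T:
  once X(\<cdot>,p) is identically zero, its time derivative (AX)(p) is zero too. Both one-sided
  limits at T are then 0, so the jump c is 0.\<close>

lemma ext0_next_column_eq_zero:
  assumes "h \<noteq> 0" and "lapA h M N \<phi> (Suc i, j) = 0"
    and "ext0 M N \<phi> (i, j) = 0" and "ext0 M N \<phi> (Suc i, j) = 0"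
    and "ext0 M N \<phi> (Suc i, j + 1) = 0" and "ext0 M N \<phi> (Suc i, j - 1) = 0"
  shows "ext0 M N \<phi> (Suc (Suc i), j) = 0"
  using assms by (simp add: lapA_def)

lemma interior_eq_zero_from_first_column:
  fixes \<phi> :: "'a \<Rightarrow> nat \<times> nat \<Rightarrow> real"
  assumes "h \<noteq> 0"
    and harmonic: "\<And>p. p \<in> interior M N \<Longrightarrow> \<forall>s\<in>S. \<phi> s p = 0 \<Longrightarrow>
      \<forall>s\<in>S. lapA h M N (\<phi> s) p = 0"
    and column1: "\<And>s j. s \<in> S \<Longrightarrow> ext0 M N (\<phi> s) (1, j) = 0"
    and "s \<in> S" and "p \<in> interior M N"
  shows "\<phi> s p = 0"
proof -
  define column where "column i \<longleftrightarrow> (\<forall>s\<in>S. \<forall>j. ext0 M N (\<phi> s) (i, j) = 0)" for i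
  have next_column: "column (Suc (Suc i))" if "column i" "column (Suc i)" for i
    unfolding column_def
  proof (intro ballI allI)
    fix s j assume "s \<in> S"
    show "ext0 M N (\<phi> s) (Suc (Suc i), j) = 0"
    proof (cases "(Suc i, j) \<in> interior M N")
      case True
      then have "\<forall>s\<in>S. \<phi> s (Suc i, j) = 0"
        using \<open>column (Suc i)\<close> unfolding column_def ext0_def by metis
      with True \<open>s \<in> S\<close> have "lapA h M N (\<phi> s) (Suc i, j) = 0"
        using harmonic by blast
      with that \<open>s \<in> S\<close> \<open>h \<noteq> 0\<close> show ?thesis
        by (intro ext0_next_column_eq_zero) (auto simp: column_def)
    next
      case False
      then have "(Suc (Suc i), j) \<notin> interior M N" by (auto simp: interior_def)
      then show ?thesis by (simp add: ext0_def)
    qed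
  qed
  have "column i \<and> column (Suc i)" for i
  proof (induction i)
    case 0
    show ?case using column1 by (auto simp: column_def ext0_def interior_def)
  next
    case (Suc i)
    then show ?case using next_column by blast
  qed
  then have "column (fst p)" by blast
  with assms(4,5) show ?thesis
    unfolding column_def ext0_def by (metis prod.collapse)
qed

lemma derivative_eq_zero_if_vanishing:
  fixes f :: "real \<Rightarrow> real"
  assumes "(f has_real_derivative D) (at t within S)" and "at t within S \<noteq> bot"
    and "t \<in> S" and "\<And>s. s \<in> S \<Longrightarrow> f s = 0"
  shows "D = 0"
proof -
  have "((\<lambda>_. 0) has_real_derivative 0) (at t within S)" by simp
  then have "(f has_real_derivative 0) (at t within S)"
    by (rule has_field_derivative_transform_within[where d = 1]) (use assms in auto)
  with assms(1,2) show ?thesis using has_field_derivative_unique by blast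
qed

lemma derivative_eq_zero_off_jump:
  fixes f g :: "real \<Rightarrow> real"
  assumes "T > 0"
    and before: "\<And>t. t \<in> {0..<T} \<Longrightarrow> (f has_real_derivative g t) (at t within {0..<T})"
    and after: "\<And>t. t > T \<Longrightarrow> (f has_real_derivative g t) (at t)"
    and vanish: "\<And>s. 0 \<le> s \<Longrightarrow> s \<noteq> T \<Longrightarrow> f s = 0"
    and "0 \<le> t" and "t \<noteq> T"
  shows "g t = 0"
proof (cases "t < T")
  case True
  with assms(5) have t: "t \<in> {0..<T}" by simp
  show ?thesis
  proof (rule derivative_eq_zero_if_vanishing)
    show "(f has_real_derivative g t) (at t within {0..<T})"
      using before[OF t] .
    show "at t within {0..<T} \<noteq> bot"
      using t by (simp add: trivial_limit_within)
  qed (use t vanish in auto)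
next
  case False
  with assms(6) have t: "t \<in> {T<..}" by simp
  then have at_eq: "at t within {T<..} = at t" by (intro at_within_open) auto
  show ?thesis
  proof (rule derivative_eq_zero_if_vanishing)
    show "(f has_real_derivative g t) (at t within {T<..})"
      using after t by (simp only: at_eq greaterThan_iff)
    show "at t within {T<..} \<noteq> bot"
      by (simp add: at_eq)
  qed (use t vanish \<open>T > 0\<close> in auto)
qed

lemma one_sided_limits_eq_zero_off_jump:
  fixes f :: "real \<Rightarrow> real"
  assumes "T > 0" and "(f \<longlongrightarrow> L) (at_left T)" and "(f \<longlongrightarrow> R) (at_right T)"
    and vanish: "\<And>s. 0 \<le> s \<Longrightarrow> s \<noteq> T \<Longrightarrow> f s = 0"
  shows "L = 0" and "R = 0"
proof -
  have "\<forall>\<^sub>F s in at_left T. f s = 0"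
    unfolding eventually_at_left_field using \<open>T > 0\<close> vanish by (intro exI[of _ 0]) auto
  with assms(2) show "L = 0"
    using tendsto_eventually tendsto_unique trivial_limit_at_left_real by blast
  have "\<forall>\<^sub>F s in at_right T. f s = 0"
    unfolding eventually_at_right_field using \<open>T > 0\<close> vanish by (intro exI[of _ "T + 1"]) auto
  with assms(3) show "R = 0"
    using tendsto_eventually tendsto_unique trivial_limit_at_right_real by blast
qed

theorem theorem2p22:
  fixes h T :: real and M N :: nat
    and X :: "real \<Rightarrow> nat \<times> nat \<Rightarrow> real" and c :: "nat \<times> nat \<Rightarrow> real"
  assumes "h > 0" and "M \<ge> 2" and "N \<ge> 2" and "T > 0"
    and eq_before: "\<And>t p. t \<in> {0..<T} \<Longrightarrow> p \<in> interior M N \<Longrightarrow>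
        ((\<lambda>s. X s p) has_real_derivative lapA h M N (X t) p) (at t within {0..<T})"
    and eq_after: "\<And>t p. t > T \<Longrightarrow> p \<in> interior M N \<Longrightarrow>
        ((\<lambda>s. X s p) has_real_derivative lapA h M N (X t) p) (at t)"
    and jump: "\<And>p. p \<in> interior M N \<Longrightarrow> \<exists>xm xp.
        ((\<lambda>s. X s p) \<longlongrightarrow> xm) (at_left T) \<and> ((\<lambda>s. X s p) \<longlongrightarrow> xp) (at_right T)
        \<and> xp - xm = c p"
    and init: "\<And>p. p \<in> interior M N \<Longrightarrow> X 0 p = 0"
    and gamma0: "\<And>t j. t \<ge> 0 \<Longrightarrow> t \<noteq> T \<Longrightarrow> j \<le> N \<Longrightarrow> ext0 M N (X t) (0, j) = 0"
    and gamma1: "\<And>t j. t \<ge> 0 \<Longrightarrow> t \<noteq> T \<Longrightarrow> 1 \<le> j \<Longrightarrow> j \<le> N - 1 \<Longrightarrow> X t (1, j) = 0"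
  shows "(\<forall>t p. t \<ge> 0 \<longrightarrow> t \<noteq> T \<longrightarrow> p \<in> interior M N \<longrightarrow> X t p = 0)
         \<and> (\<forall>p \<in> interior M N. c p = 0)"
proof -
  define S where "S = {t. 0 \<le> t \<and> t \<noteq> T}"
  have X_zero: "X t p = 0" if "t \<in> S" "p \<in> interior M N" for t p
  proof (rule interior_eq_zero_from_first_column[where h = h and \<phi> = X and S = S])
    show "\<forall>t\<in>S. lapA h M N (X t) q = 0"
      if "q \<in> interior M N" and "\<forall>t\<in>S. X t q = 0" for q
    proof
      fix t assume "t \<in> S"
      show "lapA h M N (X t) q = 0"
      proof (rule derivative_eq_zero_off_jump
          [where f = "\<lambda>s. X s q" and g = "\<lambda>s. lapA h M N (X s) q"])
        show "((\<lambda>s. X s q) has_real_derivative lapA h M N (X s) q) (at s within {0..<T})"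
          if "s \<in> {0..<T}" for s
          using eq_before[OF that \<open>q \<in> interior M N\<close>] .
        show "((\<lambda>s. X s q) has_real_derivative lapA h M N (X s) q) (at s)" if "T < s" for s
          using eq_after[OF that \<open>q \<in> interior M N\<close>] .
      qed (use \<open>T > 0\<close> \<open>t \<in> S\<close> \<open>\<forall>t\<in>S. X t q = 0\<close> in \<open>auto simp: S_def\<close>)
    qed
    show "ext0 M N (X s) (1, j) = 0" if "s \<in> S" for s j
      using gamma1 that by (auto simp: S_def ext0_def interior_def)
  qed (use \<open>h > 0\<close> that in auto)
  have "c p = 0" if p: "p \<in> interior M N" for p
  proof -
    obtain L R where L: "((\<lambda>s. X s p) \<longlongrightarrow> L) (at_left T)"
      and R: "((\<lambda>s. X s p) \<longlongrightarrow> R) (at_right T)" and "R - L = c p"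
      using jump[OF p] by blast
    moreover have "X s p = 0" if "0 \<le> s" "s \<noteq> T" for s
      using X_zero that p by (simp add: S_def)
    ultimately show ?thesis
      using one_sided_limits_eq_zero_off_jump[OF \<open>T > 0\<close> L R] by simp
  qed
  with X_zero show ?thesis by (auto simp: S_def)
qed

end
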